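(* Let $k\ge 0$ be an integer and let $G$ be a finite simple graph on $n\ge 1$ vertices with average degree $d(G)$. Then $\alpha_k(G) > \frac{k+1}{d(G)+2k+2}\, n$.
   Context: For a graph $G=(V,E)$ and an integer $k\ge 0$, a $k$-independent set is a set $S\subseteq V$ such that the induced subgraph $G[S]$ has maximum degree at most $k$; $\alpha_k(G)$ denotes the maximum cardinality of a $k$-independent set of $G$. The average degree is $d(G)=\frac{1}{n}\sum_{v\in V}\deg(v)=\frac{2|E|}{n}$. *)

theory Defs
  imports Complex_Main
begin

definition simple_graph :: "'a set \<Rightarrow> 'a set set \<Rightarrow> bool" where
  "simple_graph V E \<longleftrightarrow> finite V \<and> (\<forall>e\<in>E. e \<subseteq> V \<and> card e = 2)"

definition degree :: "'a set set \<Rightarrow> 'a \<Rightarrow> nat" where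
  "degree E v = card {e \<in> E. v \<in> e}"

definition induced_degree :: "'a set set \<Rightarrow> 'a set \<Rightarrow> 'a \<Rightarrow> nat" where
  "induced_degree E S v = card {e \<in> E. v \<in> e \<and> e \<subseteq> S}"

definition k_independent :: "'a set \<Rightarrow> 'a set set \<Rightarrow> nat \<Rightarrow> 'a set \<Rightarrow> bool" where
  "k_independent V E k S \<longleftrightarrow> S \<subseteq> V \<and> (\<forall>v\<in>S. induced_degree E S v \<le> k)"

definition alpha_k :: "'a set \<Rightarrow> 'a set set \<Rightarrow> nat \<Rightarrow> nat" where
  "alpha_k V E k = Max (card ` {S. k_independent V E k S})"

definition avg_degree :: "'a set \<Rightarrow> 'a set set \<Rightarrow> real" where
  "avg_degree V E = (\<Sum>v\<in>V. real (degree E v)) / real (card V)"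

end

theory Submission
  imports Defs
begin

(* Write n = |V|, m = |E|, c = k + 1.  The claim is equivalent to finding a
   k-independent set S with  |S| (2m + 2cn) > c n^2  (core_bound).  This is proved by
   induction on n.
   - If some vertex v has  n deg(v) >= c n + 2m,  delete it: the induction hypothesis for
     G - v gives such a set there, and an elementary inequality (deletion_step_arith)
     shows that the bound for G - v implies the bound for G.
   - Otherwise every degree is below c + 2m/n.  Take S maximising the potential
     (2c - 1)|S| - 2 e(S), where e(S) counts the edges inside S.  Removing a vertex of S
     cannot increase the potential, so S is k-independent; adding a vertex w outside S
     cannot increase it either, so w has at least c neighbours in S.  Counting the edges
     between S and V - S gives  c (n - |S|) <= sum of degrees over S  (maximiser_good),
     and the degree bound turns this into the claimed inequality (low_degree_bound).
   The theorem follows by rewriting the average degree as 2m/n (handshake lemma). *)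

lemma incidence_double_count:
  assumes "finite A" "finite F"
  shows "(\<Sum>w\<in>A. card {e\<in>F. w \<in> e}) = (\<Sum>e\<in>F. card (e \<inter> A))"
proof -
  have "card {e\<in>F. w \<in> e} = (\<Sum>e\<in>F. if w \<in> e then 1 else 0)" for w
    using assms(2) by (simp add: sum.If_cases Int_def)
  moreover have "card (e \<inter> A) = (\<Sum>w\<in>A. if w \<in> e then 1 else 0)" for e
    using assms(1) by (simp add: sum.If_cases Int_def conj_commute)
  ultimately show ?thesis by (simp add: sum.swap[of _ A F])
qed

lemma simple_graph_finite_edges: "simple_graph V E \<Longrightarrow> finite E"
  unfolding simple_graph_def by (metis Pow_iff finite_Pow_iff rev_finite_subset subsetI)

lemma simple_graph_edge_finite: "simple_graph V E \<Longrightarrow> e \<in> E \<Longrightarrow> finite e"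
  unfolding simple_graph_def by (metis card.infinite zero_neq_numeral)

lemma degree_sum:
  assumes G: "simple_graph V E"
  shows "(\<Sum>w\<in>V. degree E w) = 2 * card E"
proof -
  have fV: "finite V" using G unfolding simple_graph_def by auto
  have "(\<Sum>w\<in>V. degree E w) = (\<Sum>e\<in>E. card (e \<inter> V))"
    unfolding degree_def by (rule incidence_double_count[OF fV simple_graph_finite_edges[OF G]])
  also have "\<dots> = (\<Sum>e\<in>E. 2)"
    using G by (intro sum.cong) (auto simp: simple_graph_def Int_absorb2)
  finally show ?thesis by simp
qed

lemma positive_degree_two_vertices:
  assumes G: "simple_graph V E" and "degree E v > 0"
  shows "card V \<ge> 2"
proof -
  obtain e where "e \<in> E" using assms(2) unfolding degree_def
    by (metis (no_types, lifting) card.empty empty_Collect_eq less_irrefl)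
  then have "e \<subseteq> V" "card e = 2" "finite V" using G unfolding simple_graph_def by auto
  then show ?thesis using card_mono by metis
qed

text \<open>Counting the edges between S and V - S from outside: the numbers of edges from the
  vertices w outside S into S sum to at most the degree sum over S, because every crossing
  edge has exactly one end on each side.\<close>
lemma cut_edge_count:
  assumes G: "simple_graph V E" and SV: "S \<subseteq> V"
  shows "(\<Sum>w\<in>V - S. induced_degree E (insert w S) w) \<le> (\<Sum>u\<in>S. degree E u)"
proof -
  have fV: "finite V" using G unfolding simple_graph_def by auto
  have fS: "finite S" using SV fV finite_subset by blast
  define C where "C = {e\<in>E. e \<inter> S \<noteq> {} \<and> e \<inter> (V - S) \<noteq> {}}"
  have fC: "finite C" using simple_graph_finite_edges[OF G] C_def by simp
  have into_cut: "induced_degree E (insert w S) w \<le> card {e\<in>C. w \<in> e}" if w: "w \<in> V - S" for w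
    unfolding induced_degree_def
  proof (intro card_mono[OF _ subsetI])
    fix e assume "e \<in> {e\<in>E. w \<in> e \<and> e \<subseteq> insert w S}"
    then have e: "e \<in> E" "w \<in> e" "e \<subseteq> insert w S" by auto
    have "card e = 2" using G e(1) unfolding simple_graph_def by auto
    then obtain u where "u \<in> e" "u \<noteq> w" by (metis card_2_iff insertCI)
    then show "e \<in> {e\<in>C. w \<in> e}" unfolding C_def using e w by auto
  qed (use fC in auto)
  have balanced: "card (e \<inter> (V - S)) = card (e \<inter> S)" if "e \<in> C" for e
  proof -
    have e: "e \<in> E" "e \<inter> S \<noteq> {}" "e \<inter> (V - S) \<noteq> {}" using that C_def by auto
    have fe: "finite e" using simple_graph_edge_finite[OF G e(1)] .
    have "e \<subseteq> V" "card e = 2" using G e(1) unfolding simple_graph_def by auto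
    moreover have "e = (e \<inter> (V - S)) \<union> (e \<inter> S)" using \<open>e \<subseteq> V\<close> by auto
    moreover have "card ((e \<inter> (V - S)) \<union> (e \<inter> S)) = card (e \<inter> (V - S)) + card (e \<inter> S)"
      using fe by (intro card_Un_disjoint) auto
    ultimately have "card (e \<inter> (V - S)) + card (e \<inter> S) = 2" by simp
    moreover have "card (e \<inter> (V - S)) \<ge> 1" "card (e \<inter> S) \<ge> 1"
      using e fe by (auto simp: Suc_le_eq card_gt_0_iff)
    ultimately show ?thesis by linarith
  qed
  have "(\<Sum>w\<in>V - S. induced_degree E (insert w S) w) \<le> (\<Sum>w\<in>V - S. card {e\<in>C. w \<in> e})"
    by (intro sum_mono into_cut)
  also have "\<dots> = (\<Sum>e\<in>C. card (e \<inter> (V - S)))"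
    using incidence_double_count fV fC by blast
  also have "\<dots> = (\<Sum>e\<in>C. card (e \<inter> S))" by (intro sum.cong balanced) auto
  also have "\<dots> = (\<Sum>u\<in>S. card {e\<in>C. u \<in> e})"
    using incidence_double_count[OF fS fC] by simp
  also have "\<dots> \<le> (\<Sum>u\<in>S. degree E u)" unfolding degree_def
    using simple_graph_finite_edges[OF G] by (intro sum_mono card_mono) (auto simp: C_def)
  finally show ?thesis .
qed

definition potential :: "'a set set \<Rightarrow> nat \<Rightarrow> 'a set \<Rightarrow> int" where
  "potential E c S = (2 * int c - 1) * int (card S) - 2 * int (card {e\<in>E. e \<subseteq> S})"

lemma potential_add_vertex:
  assumes "finite E" "finite T" "v \<in> T"
  shows "potential E c T = potential E c (T - {v}) + (2 * int c - 1) - 2 * int (induced_degree E T v)"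
proof -
  have split: "{e\<in>E. e \<subseteq> T} = {e\<in>E. e \<subseteq> T - {v}} \<union> {e\<in>E. v \<in> e \<and> e \<subseteq> T}" by auto
  have "card {e\<in>E. e \<subseteq> T} = card {e\<in>E. e \<subseteq> T - {v}} + induced_degree E T v"
    unfolding split induced_degree_def using assms(1) by (intro card_Un_disjoint) auto
  moreover have "card T = card (T - {v}) + 1" using card_Suc_Diff1[OF assms(2,3)] by simp
  ultimately show ?thesis unfolding potential_def by (simp add: algebra_simps)
qed

text \<open>A set maximising the potential with c = k + 1 is k-independent, and the edges from
  outside it into it are numerous enough that c |V - S| is at most the degree sum over S.\<close>
lemma maximiser_good:
  assumes G: "simple_graph V E"
  shows "\<exists>S. k_independent V E k S \<and> (k + 1) * card (V - S) \<le> (\<Sum>u\<in>S. degree E u)"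
proof -
  have fV: "finite V" and fE: "finite E"
    using G simple_graph_finite_edges unfolding simple_graph_def by auto
  define pot where "pot = potential E (k + 1)"
  have fin: "finite (pot ` Pow V)" using fV by simp
  have "Max (pot ` Pow V) \<in> pot ` Pow V" using fin by (intro Max_in) auto
  then obtain S where SV: "S \<subseteq> V" and S_max: "pot S = Max (pot ` Pow V)" by auto
  have max: "pot T \<le> pot S" if "T \<subseteq> V" for T
    unfolding S_max using fin that by (intro Max_ge) auto
  have fS: "finite S" using SV fV finite_subset by blast
  have "induced_degree E S v \<le> k" if v: "v \<in> S" for v
  proof -
    have "pot (S - {v}) \<le> pot S" using SV by (intro max) auto
    then show ?thesis using potential_add_vertex[OF fE fS v, of "k + 1"] unfolding pot_def by simp
  qed
  then have indep: "k_independent V E k S" unfolding k_independent_def using SV by auto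
  have "k + 1 \<le> induced_degree E (insert w S) w" if w: "w \<in> V - S" for w
  proof -
    have "pot (insert w S) \<le> pot S" using SV w by (intro max) auto
    moreover have "insert w S - {w} = S" using w by auto
    ultimately show ?thesis
      using potential_add_vertex[of E "insert w S" w "k + 1"] fE fS unfolding pot_def by simp
  qed
  then have "(\<Sum>w\<in>V - S. k + 1) \<le> (\<Sum>w\<in>V - S. induced_degree E (insert w S) w)"
    by (rule sum_mono)
  then have "(k + 1) * card (V - S) \<le> (\<Sum>w\<in>V - S. induced_degree E (insert w S) w)"
    by (simp add: mult.commute)
  also have "\<dots> \<le> (\<Sum>u\<in>S. degree E u)" by (rule cut_edge_count[OF G SV])
  finally show ?thesis using indep by blast
qed

lemma low_degree_bound:
  assumes G: "simple_graph V E" and n1: "card V \<ge> 1"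
    and low: "\<And>u. u \<in> V \<Longrightarrow>
      real (card V) * real (degree E u) < (real k + 1) * real (card V) + real (2 * card E)"
  shows "\<exists>S. k_independent V E k S \<and>
    real (card S) * (real (2 * card E) + 2 * (real k + 1) * real (card V)) > (real k + 1) * real (card V) ^ 2"
proof -
  define n c D where "n = real (card V)" and "c = real k + 1" and "D = real (2 * card E)"
  obtain S where S: "k_independent V E k S" and good: "(k + 1) * card (V - S) \<le> (\<Sum>u\<in>S. degree E u)"
    using maximiser_good[OF G] by blast
  have SV: "S \<subseteq> V" using S unfolding k_independent_def by auto
  have fV: "finite V" using G unfolding simple_graph_def by auto
  have fS: "finite S" using SV fV finite_subset by blast
  define s R where "s = real (card S)" and "R = (\<Sum>u\<in>S. real (degree E u))"
  have card_rest: "real (card (V - S)) = n - s" unfolding n_def s_def using SV fS fV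
    by (simp add: card_Diff_subset of_nat_diff card_mono)
  have "c * (n - s) = real ((k + 1) * card (V - S))" unfolding of_nat_mult card_rest c_def by simp
  also have "\<dots> \<le> R" unfolding R_def using good by (metis of_nat_le_iff of_nat_sum)
  finally have lower: "c * (n - s) \<le> R" .
  have "c * n > 0" using n1 unfolding c_def n_def by simp
  then have "S \<noteq> {}" using lower unfolding R_def s_def by auto
  then have "(\<Sum>u\<in>S. n * real (degree E u)) < (\<Sum>u\<in>S. c * n + D)"
    using fS SV low unfolding n_def c_def D_def by (intro sum_strict_mono) auto
  then have "n * R < s * (c * n + D)" unfolding R_def s_def by (simp add: sum_distrib_left)
  moreover have "n * (c * (n - s)) \<le> n * R" using lower n1 n_def by (intro mult_left_mono) auto
  ultimately have "c * n ^ 2 < s * (D + 2 * c * n)" by (simp add: algebra_simps power2_eq_square)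
  then show ?thesis using S unfolding s_def c_def n_def D_def by auto
qed

text \<open>Arithmetic of the deletion step: deleting a vertex of degree d with n d >= c n + D turns
  a bound for the smaller graph (n - 1 vertices, degree sum D - 2d) into one for the graph.\<close>
lemma deletion_step_arith:
  fixes n c D d s :: real
  assumes c1: "c \<ge> 1" and n2: "n \<ge> 2" and d0: "0 \<le> d" and dD: "2 * d \<le> D"
    and big: "n * d \<ge> c * n + D"
    and smaller: "s * (D - 2 * d + 2 * c * (n - 1)) > c * (n - 1) ^ 2"
  shows "s * (D + 2 * c * n) > c * n ^ 2"
proof -
  define P Q where "P = D - 2 * d + 2 * c * (n - 1)" and "Q = D + 2 * c * n"
  have "1 * 1 \<le> c * (n - 1)" using c1 n2 by (intro mult_mono) auto
  then have P0: "P > 0" unfolding P_def using dD by linarith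
  have "c * n > 0" using c1 n2 by simp
  then have Q0: "Q > 0" unfolding Q_def using d0 dD by linarith
  have "(n - 1) ^ 2 * Q - n ^ 2 * P = 2 * n * (n * d - c * n - D) + D + 2 * c * n"
    unfolding P_def Q_def by algebra
  moreover have "2 * n * (n * d - c * n - D) \<ge> 0" using big n2 by simp
  ultimately have PQ: "n ^ 2 * P \<le> (n - 1) ^ 2 * Q" using Q0 unfolding Q_def by linarith
  have "c * (n ^ 2 * P) \<le> c * ((n - 1) ^ 2 * Q)" using PQ c1 by (intro mult_left_mono) auto
  also have "\<dots> = (c * (n - 1) ^ 2) * Q" by (simp add: mult.assoc)
  also have "\<dots> < (s * P) * Q" using smaller Q0 unfolding P_def by (intro mult_strict_right_mono)
  finally have "(c * n ^ 2) * P < (s * Q) * P" by (simp add: algebra_simps)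
  then show ?thesis using P0 unfolding Q_def by (meson mult_less_cancel_right_pos)
qed

lemma delete_vertex:
  assumes G: "simple_graph V E" and vV: "v \<in> V"
  shows "simple_graph (V - {v}) {e\<in>E. v \<notin> e}"
    and "card E = card {e\<in>E. v \<notin> e} + degree E v"
    and "k_independent (V - {v}) {e\<in>E. v \<notin> e} k S \<Longrightarrow> k_independent V E k S"
proof -
  show "simple_graph (V - {v}) {e\<in>E. v \<notin> e}" using G unfolding simple_graph_def by auto
  have "E = {e\<in>E. v \<notin> e} \<union> {e\<in>E. v \<in> e}" by auto
  then show "card E = card {e\<in>E. v \<notin> e} + degree E v" unfolding degree_def
    using simple_graph_finite_edges[OF G]
    by (metis (no_types, lifting) card_Un_disjoint disjoint_iff finite_Un mem_Collect_eq)
  assume S: "k_independent (V - {v}) {e\<in>E. v \<notin> e} k S"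
  then have "S \<subseteq> V - {v}" unfolding k_independent_def by auto
  then have "induced_degree {e\<in>E. v \<notin> e} S w = induced_degree E S w" for w
    unfolding induced_degree_def by (intro arg_cong[where f = card]) auto
  then show "k_independent V E k S" using S unfolding k_independent_def by auto
qed

text \<open>The theorem in cleared-denominator form: a k-independent S with |S| (2m + 2cn) > c n^2.\<close>
lemma core_bound:
  assumes "simple_graph V E" "card V \<ge> 1"
  shows "\<exists>S. k_independent V E k S \<and>
     real (card S) * (real (2 * card E) + 2 * (real k + 1) * real (card V)) > (real k + 1) * real (card V) ^ 2"
  using assms
proof (induction "card V" arbitrary: V E rule: less_induct)
  case less
  note G = less.prems(1)
  show ?case
  proof (cases "\<exists>v\<in>V. real (card V) * real (degree E v) \<ge> (real k + 1) * real (card V) + real (2 * card E)")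
    case False
    then show ?thesis using low_degree_bound[OF G less.prems(2)] by (meson not_le)
  next
    case True
    then obtain v where vV: "v \<in> V"
      and big: "real (card V) * real (degree E v) \<ge> (real k + 1) * real (card V) + real (2 * card E)" by blast
    define V' E' where "V' = V - {v}" and "E' = {e\<in>E. v \<notin> e}"
    have "degree E v > 0"
    proof (rule ccontr)
      assume "\<not> degree E v > 0"
      then have "(real k + 1) * real (card V) \<le> 0" using big by simp
      then show False using less.prems(2) by (simp add: mult_le_0_iff)
    qed
    then have n2: "card V \<ge> 2" using positive_degree_two_vertices[OF G] by blast
    have cardV': "card V' = card V - 1" using V'_def vV G unfolding simple_graph_def by simp
    obtain S where S: "k_independent V' E' k S"
      and bound: "real (card S) * (real (2 * card E') + 2 * (real k + 1) * real (card V'))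
                   > (real k + 1) * real (card V') ^ 2"
    proof (rule less.hyps[of V' E', THEN exE])
      show "card V' < card V" "card V' \<ge> 1" using cardV' n2 by auto
      show "simple_graph V' E'" using delete_vertex(1)[OF G vV] V'_def E'_def by simp
    qed blast
    have cardE: "card E = card E' + degree E v" using delete_vertex(2)[OF G vV] E'_def by simp
    have "real (card V') = real (card V) - 1" using cardV' n2 by (simp add: of_nat_diff)
    moreover have "real (2 * card E') = real (2 * card E) - 2 * real (degree E v)" using cardE by simp
    ultimately have smaller: "real (card S) * (real (2 * card E) - 2 * real (degree E v)
          + 2 * (real k + 1) * (real (card V) - 1)) > (real k + 1) * (real (card V) - 1) ^ 2"
      using bound by simp
    have "real (card S) * (real (2 * card E) + 2 * (real k + 1) * real (card V))
          > (real k + 1) * real (card V) ^ 2"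
    proof (rule deletion_step_arith[OF _ _ _ _ big smaller])
      show "real (card V) \<ge> 2" using n2 by simp
      show "2 * real (degree E v) \<le> real (2 * card E)" using cardE by simp
    qed simp_all
    then show ?thesis using delete_vertex(3)[OF G vV] S V'_def E'_def by blast
  qed
qed

lemma card_le_alpha_k:
  assumes "simple_graph V E" "k_independent V E k S"
  shows "card S \<le> alpha_k V E k"
proof -
  have "{S. k_independent V E k S} \<subseteq> Pow V" unfolding k_independent_def by auto
  then have "finite {S. k_independent V E k S}"
    using assms(1) unfolding simple_graph_def by (meson finite_Pow_iff finite_subset)
  then show ?thesis unfolding alpha_k_def using assms(2) by (intro Max_ge) auto
qed

theorem mainTheorem2:
  fixes V :: "'a set" and E :: "'a set set" and k :: nat
  assumes "simple_graph V E" and "card V \<ge> 1"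
  shows "real (alpha_k V E k) >
           (real k + 1) / (avg_degree V E + 2 * real k + 2) * real (card V)"
proof -
  define n D where "n = real (card V)" and "D = real (2 * card E)"
  obtain S where S: "k_independent V E k S"
    and bound: "real (card S) * (D + 2 * (real k + 1) * n) > (real k + 1) * n ^ 2"
    using core_bound[OF assms] unfolding n_def D_def by blast
  have n1: "n \<ge> 1" using assms n_def by simp
  have avg: "avg_degree V E = D / n" unfolding avg_degree_def D_def n_def
    using degree_sum[OF assms(1)] by (metis of_nat_sum)
  have pos: "D + 2 * (real k + 1) * n > 0" using n1 unfolding D_def by (simp add: add_nonneg_pos)
  have "(real k + 1) / (avg_degree V E + 2 * real k + 2) * n = (real k + 1) * n ^ 2 / (D + 2 * (real k + 1) * n)"
    unfolding avg using n1 by (simp add: field_simps power2_eq_square)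
  also have "\<dots> < real (card S)" using bound pos by (simp add: pos_divide_less_eq algebra_simps)
  also have "\<dots> \<le> real (alpha_k V E k)" using card_le_alpha_k[OF assms(1) S] by simp
  finally show ?thesis unfolding n_def .
qed

end
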